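(* Let $(A, b, c)$ be a rational $k$-level LP instance such that for all $l = 1,\ldots,k-1$ and $i = 1,\ldots,k$, $A_{li} = \begin{pmatrix} A'_{li} \\ A''_{li}\end{pmatrix}$, $b_l = \begin{pmatrix} b'_l \\ b''_l\end{pmatrix}$, with $A'_{li} = 0$ for all $l = 1,\ldots,k-1$, $i = l+1,\ldots,k$. Define a $k$-level LP instance $(\hat{A}, \hat{b}, \hat{c})$ by $\hat{A}_{li} = A''_{li}$, $\hat{b}_l = b''_l$ for all $l = 1,\ldots,k-1$, $i = 1,\ldots,k$, $\hat{c} = c$, and $$\begin{pmatrix}\hat{A}_{k1} & \hat{A}_{k2} & \cdots & \hat{A}_{kk}\end{pmatrix} = \begin{pmatrix} A'_{11} & & & \\ \vdots & \ddots & & \\ A'_{k-1\,1} & & A'_{k-1\,k-1} & \\ A_{k1} & \cdots & A_{k\,k-1} & A_{kk}\end{pmatrix},\qquad \hat{b}_k = \begin{pmatrix} b'_1 \\ \vdots \\ b'_{k-1} \\ b_k\end{pmatrix}.$$ Then the instances $(\hat{A}, \hat{b}, \hat{c})$ and $(A,b,c)$ have the same feasible set and the same optimal objective value.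
   Context: A $k$-level LP instance $(A,b,c)$ has data $A_{li} \in \mathbb{Q}^{m_l \times n_i}$, $b_l \in \mathbb{Q}^{m_l}$, $c_{li} \in \mathbb{Q}^{n_i}$. Player $l$ chooses $x_l \in \mathbb{R}^{n_l}$ after players $1,\ldots,l-1$. The $l$-th player's problem, given $x_1,\ldots,x_{l-1}$, is $\inf_{x_l,\ldots,x_k}\{\sum_{i=l}^k c_{li}^\top x_i : \sum_{i=1}^k A_{li}x_i \ge b_l,\ (x_{l+1},\ldots,x_k) \in \mathcal{S}(\text{problem of player } l+1 \text{ given } x_1,\ldots,x_l)\}$, and the $k$-th player's problem is $\inf_{x_k}\{c_{kk}^\top x_k : \sum_{i=1}^k A_{ki}x_i \ge b_k\}$. The instance is identified with the first player's problem; its feasible set and optimal value are those of the first player's problem. $\mathcal{S}(\cdot)$ denotes the optimal solution set (optimistic setting). *)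

theory Defs
  imports Complex_Main "HOL-Library.Extended_Real"
begin

text \<open>Levels/players are indexed 1..k, block variables
 x_i has n_i components indexed 0..<n_i, constraint block l has m_l rows
 indexed 0..<m_l.
  A l i r j = entry (r,j) of A_li,  b l r = entry r of b_l,
  c l i j = entry j of c_li.  A point is x :: nat => nat => real with x i j
 the j-th component of x_i.\<close>

record mlp =
  lv :: nat
  nv :: "nat \<Rightarrow> nat"
  mc :: "nat \<Rightarrow> nat"
  Am :: "nat \<Rightarrow> nat \<Rightarrow> nat \<Rightarrow> nat \<Rightarrow> rat"
  bv :: "nat \<Rightarrow> nat \<Rightarrow> rat"
  cv :: "nat \<Rightarrow> nat \<Rightarrow> nat \<Rightarrow> rat"

type_synonym point = "nat \<Rightarrow> nat \<Rightarrow> real"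

definition vecs :: "mlp \<Rightarrow> point set" where
  "vecs I = {x. \<forall>i j. (i < 1 \<or> i > lv I \<or> j \<ge> nv I i) \<longrightarrow> x i j = 0}"

definition cons_ok :: "mlp \<Rightarrow> nat \<Rightarrow> point \<Rightarrow> bool" where
  "cons_ok I l x \<longleftrightarrow> (\<forall>r < mc I l.
     (\<Sum>i\<in>{1..lv I}. \<Sum>j<nv I i. real_of_rat (Am I l i r j) * x i j) \<ge> real_of_rat (bv I l r))"

definition obj :: "mlp \<Rightarrow> nat \<Rightarrow> point \<Rightarrow> real" where
  "obj I l x = (\<Sum>i\<in>{l..lv I}. \<Sum>j<nv I i. real_of_rat (cv I l i j) * x i j)"

text \<open>feasr I d x: feasible set of the problem of player l = k - d, given the
 decisions x_1..x_{l-1} of x (levels below l of the returned points agree with x).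
 A point y is feasible iff it satisfies constraint block l and, for l < k,
 its part (y_{l+1},...,y_k) is an optimal solution of the problem of player l+1
 given y_1..y_l (optimistic setting).\<close>
primrec feasr :: "mlp \<Rightarrow> nat \<Rightarrow> point \<Rightarrow> point set" where
  "feasr I 0 x = {y \<in> vecs I. (\<forall>i < lv I. y i = x i) \<and> cons_ok I (lv I) y}"
| "feasr I (Suc d) x = {y \<in> vecs I. (\<forall>i < lv I - Suc d. y i = x i)
       \<and> cons_ok I (lv I - Suc d) y
       \<and> y \<in> feasr I d y
       \<and> (\<forall>z \<in> feasr I d y. obj I (lv I - d) y \<le> obj I (lv I - d) z)}"

definition feas_lvl :: "mlp \<Rightarrow> nat \<Rightarrow> point \<Rightarrow> point set" where
  "feas_lvl I l x = feasr I (lv I - l) x"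

definition feasible_set :: "mlp \<Rightarrow> point set" where
  "feasible_set I = feas_lvl I 1 (\<lambda>_ _. 0)"

definition opt_value :: "mlp \<Rightarrow> ereal" where
  "opt_value I = (INF y \<in> feasible_set I. ereal (obj I 1 y))"

text \<open>Transformation of the lemma. m' l = number of rows of the primed part A'_l
 (the first m' l rows of block l, for l = 1..k-1).\<close>
definition off :: "(nat \<Rightarrow> nat) \<Rightarrow> nat \<Rightarrow> nat" where
  "off m' l = (\<Sum>t\<in>{1..<l}. m' t)"

definition blk :: "(nat \<Rightarrow> nat) \<Rightarrow> nat \<Rightarrow> nat" where
  "blk m' r = (THE l. 1 \<le> l \<and> off m' l \<le> r \<and> r < off m' (Suc l))"

definition hat :: "mlp \<Rightarrow> (nat \<Rightarrow> nat) \<Rightarrow> mlp" where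
  "hat I m' = I\<lparr>
     mc := (\<lambda>l. if 1 \<le> l \<and> l < lv I then mc I l - m' l
               else if l = lv I then off m' (lv I) + mc I (lv I) else mc I l),
     Am := (\<lambda>l i r j. if 1 \<le> l \<and> l < lv I then Am I l i (m' l + r) j
               else if l = lv I then
                 (if r < off m' (lv I) then
                    (let t = blk m' r in if i \<le> t then Am I t i (r - off m' t) j else 0)
                  else Am I l i (r - off m' (lv I)) j)
               else Am I l i r j),
     bv := (\<lambda>l r. if 1 \<le> l \<and> l < lv I then bv I l (m' l + r)
               else if l = lv I then
                 (if r < off m' (lv I) then
                    (let t = blk m' r in bv I t (r - off m' t))
                  else bv I l (r - off m' (lv I)))
               else bv I l r)\<rparr>"

end

theory Submission
  imports Defs
begin

text \<open>
  The primed rows of level l only involve x_1, ..., x_l, which are fixed for every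
  player below l. Inside the problem of player l + 1, given x_1, ..., x_l, they are
  therefore either satisfied by all candidate points or by none, and moving them
  to the last level leaves every optimal solution set, and hence the feasible set
  of the instance, unchanged. Formally, by induction from the last level upwards,
  the level-l feasible set of the transformed instance is that of the original one
  intersected with the primed rows of the levels above l.
\<close>

definition row_sat :: "mlp \<Rightarrow> nat \<Rightarrow> nat \<Rightarrow> point \<Rightarrow> bool" where
  "row_sat I l r y \<longleftrightarrow>
     (\<Sum>i\<in>{1..lv I}. \<Sum>j<nv I i. real_of_rat (Am I l i r j) * y i j) \<ge> real_of_rat (bv I l r)"

definition primed_rows_sat :: "mlp \<Rightarrow> (nat \<Rightarrow> nat) \<Rightarrow> nat \<Rightarrow> point \<Rightarrow> bool" where
  "primed_rows_sat I m' l y \<longleftrightarrow> (\<forall>t. 1 \<le> t \<longrightarrow> t < l \<longrightarrow> (\<forall>r < m' t. row_sat I t r y))"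

lemma all_less_add_iff:
  "(\<forall>r < a + b. P (r::nat)) \<longleftrightarrow> (\<forall>r < a. P r) \<and> (\<forall>r < b. P (a + r))"
  by (metis add_less_cancel_left le_add_diff_inverse not_le trans_less_add1)

lemma cons_ok_iff_row_sat: "cons_ok I l y \<longleftrightarrow> (\<forall>r < mc I l. row_sat I l r y)"
  by (simp add: cons_ok_def row_sat_def)

lemma primed_rows_sat_Suc:
  "1 \<le> l \<Longrightarrow> primed_rows_sat I m' (Suc l) y \<longleftrightarrow> primed_rows_sat I m' l y \<and> (\<forall>r < m' l. row_sat I l r y)"
  unfolding primed_rows_sat_def using less_Suc_eq by auto

lemma feasr_agrees_below: "z \<in> feasr I d y \<Longrightarrow> \<forall>i < lv I - d. z i = y i"
  by (cases d) auto

lemma off_mono: "a \<le> b \<Longrightarrow> off m' a \<le> off m' b"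
  unfolding off_def by (rule sum_mono2) auto

lemma off_Suc: "1 \<le> t \<Longrightarrow> off m' (Suc t) = off m' t + m' t"
  unfolding off_def by simp

lemma blk_eqI:
  assumes "1 \<le> t" "off m' t \<le> r" "r < off m' (Suc t)"
  shows "blk m' r = t"
  unfolding blk_def
proof (rule the_equality)
  fix l assume l: "1 \<le> l \<and> off m' l \<le> r \<and> r < off m' (Suc l)"
  show "l = t"
  proof (rule ccontr)
    assume "l \<noteq> t"
    then consider "Suc l \<le> t" | "Suc t \<le> l" by linarith
    then show False
      by cases (use l assms off_mono[of "Suc l" t m'] off_mono[of "Suc t" l m'] in linarith)+
  qed
qed (use assms in auto)

lemma off_block_exists:
  "r < off m' k \<Longrightarrow> \<exists>t. 1 \<le> t \<and> t < k \<and> off m' t \<le> r \<and> r < off m' (Suc t)"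
proof (induction k)
  case 0
  then show ?case by (simp add: off_def)
next
  case (Suc k)
  show ?case
  proof (cases "k = 0")
    case True
    then show ?thesis using Suc.prems by (simp add: off_def)
  next
    case False
    then have k: "1 \<le> k" by simp
    show ?thesis
    proof (cases "r < off m' k")
      case True
      then show ?thesis using Suc.IH by (auto intro: less_SucI)
    next
      case False
      then show ?thesis using Suc.prems k by (intro exI[of _ k]) auto
    qed
  qed
qed

lemma lv_hat [simp]: "lv (hat I m') = lv I"
  and nv_hat [simp]: "nv (hat I m') = nv I"
  and cv_hat [simp]: "cv (hat I m') = cv I"
  by (simp_all add: hat_def)

lemma obj_hat [simp]: "obj (hat I m') = obj I"
  by (intro ext) (simp add: obj_def)

lemma vecs_hat [simp]: "vecs (hat I m') = vecs I"
  by (simp add: vecs_def)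

lemma row_sat_hat_last_unprimed:
  "off m' (lv I) \<le> r \<Longrightarrow> row_sat (hat I m') (lv I) r y \<longleftrightarrow> row_sat I (lv I) (r - off m' (lv I)) y"
  by (simp add: row_sat_def hat_def)

locale primed_split =
  fixes I :: mlp and m' :: "nat \<Rightarrow> nat"
  assumes primed_le_mc: "\<And>l. 1 \<le> l \<Longrightarrow> l < lv I \<Longrightarrow> m' l \<le> mc I l"
    and primed_upper_zero: "\<And>l i r j. 1 \<le> l \<Longrightarrow> l < lv I \<Longrightarrow> l < i \<Longrightarrow> i \<le> lv I \<Longrightarrow>
           r < m' l \<Longrightarrow> j < nv I i \<Longrightarrow> Am I l i r j = 0"
begin

lemma cons_ok_split:
  assumes "1 \<le> l" "l < lv I"
  shows "cons_ok I l y \<longleftrightarrow>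
    (\<forall>r < m' l. row_sat I l r y) \<and> (\<forall>r < mc I l - m' l. row_sat I l (m' l + r) y)"
  using primed_le_mc[OF assms] all_less_add_iff[of "m' l" "mc I l - m' l"]
  by (simp add: cons_ok_iff_row_sat)

lemma cons_ok_hat_below_last:
  "1 \<le> l \<Longrightarrow> l < lv I \<Longrightarrow>
    cons_ok (hat I m') l y \<longleftrightarrow> (\<forall>r < mc I l - m' l. row_sat I l (m' l + r) y)"
  by (simp add: cons_ok_def row_sat_def hat_def)

lemma row_sat_hat_last_primed:
  assumes t: "1 \<le> t" "t < lv I" and r: "off m' t \<le> r" "r < off m' (Suc t)"
  shows "row_sat (hat I m') (lv I) r y \<longleftrightarrow> row_sat I t (r - off m' t) y"
proof -
  have "r < off m' (lv I)" using off_mono[of "Suc t" "lv I" m'] t r by linarith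
  moreover have "blk m' r = t" using t r by (intro blk_eqI) auto
  moreover have "r - off m' t < m' t" using r off_Suc[OF t(1), of m'] by linarith
  then have "(\<Sum>j<nv I i. real_of_rat (if i \<le> t then Am I t i (r - off m' t) j else 0) * y i j)
      = (\<Sum>j<nv I i. real_of_rat (Am I t i (r - off m' t) j) * y i j)" if "i \<in> {1..lv I}" for i
    using primed_upper_zero[of t i "r - off m' t"] t that by (intro sum.cong) auto
  ultimately show ?thesis by (simp add: row_sat_def hat_def Let_def)
qed

lemma cons_ok_hat_last:
  "cons_ok (hat I m') (lv I) y \<longleftrightarrow> primed_rows_sat I m' (lv I) y \<and> cons_ok I (lv I) y"
proof -
  have mc_last: "mc (hat I m') (lv I) = off m' (lv I) + mc I (lv I)" by (simp add: hat_def)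
  have primed: "(\<forall>r < off m' (lv I). row_sat (hat I m') (lv I) r y) \<longleftrightarrow> primed_rows_sat I m' (lv I) y"
  proof
    assume hat_sat: "\<forall>r < off m' (lv I). row_sat (hat I m') (lv I) r y"
    show "primed_rows_sat I m' (lv I) y"
      unfolding primed_rows_sat_def
    proof (intro allI impI)
      fix t r assume t: "1 \<le> t" "t < lv I" and r: "r < m' t"
      have "off m' t + r < off m' (Suc t)" using off_Suc[OF t(1)] r by simp
      moreover have "off m' (Suc t) \<le> off m' (lv I)" using t by (intro off_mono) simp
      ultimately show "row_sat I t r y"
        using hat_sat row_sat_hat_last_primed[OF t, of "off m' t + r"] by force
    qed
  next
    assume primed_sat: "primed_rows_sat I m' (lv I) y"
    show "\<forall>r < off m' (lv I). row_sat (hat I m') (lv I) r y"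
    proof (intro allI impI)
      fix r assume "r < off m' (lv I)"
      then obtain t where t: "1 \<le> t" "t < lv I" and r: "off m' t \<le> r" "r < off m' (Suc t)"
        using off_block_exists by blast
      have "r - off m' t < m' t" using r off_Suc[OF t(1), of m'] by linarith
      then show "row_sat (hat I m') (lv I) r y"
        using primed_sat row_sat_hat_last_primed[OF t r] t unfolding primed_rows_sat_def by blast
    qed
  qed
  have unprimed: "(\<forall>r < mc I (lv I). row_sat (hat I m') (lv I) (off m' (lv I) + r) y)
      \<longleftrightarrow> cons_ok I (lv I) y"
    by (simp add: cons_ok_iff_row_sat row_sat_hat_last_unprimed)
  show ?thesis
    unfolding cons_ok_iff_row_sat[of "hat I m'"] mc_last all_less_add_iff primed unprimed ..
qed

lemma primed_rows_sat_cong: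
  assumes "\<forall>i<l. y i = x i" "l \<le> lv I"
  shows "primed_rows_sat I m' l y \<longleftrightarrow> primed_rows_sat I m' l x"
proof -
  have "row_sat I t r y \<longleftrightarrow> row_sat I t r x" if "1 \<le> t" "t < l" "r < m' t" for t r
  proof -
    have "real_of_rat (Am I t i r j) * y i j = real_of_rat (Am I t i r j) * x i j"
      if "i \<in> {1..lv I}" "j < nv I i" for i j
      using assms primed_upper_zero[of t i r j] \<open>1 \<le> t\<close> \<open>t < l\<close> \<open>r < m' t\<close> that
      by (cases "i \<le> t") auto
    then show ?thesis unfolding row_sat_def by (metis (no_types, lifting) lessThan_iff sum.cong)
  qed
  then show ?thesis unfolding primed_rows_sat_def by blast
qed

lemma feasr_hat:
  "d < lv I \<Longrightarrow> feasr (hat I m') d x = {y \<in> feasr I d x. primed_rows_sat I m' (lv I - d) y}"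
proof (induction d arbitrary: x)
  case 0
  then show ?case by (auto simp: cons_ok_hat_last)
next
  case (Suc d)
  define l where "l = lv I - Suc d"
  have l: "1 \<le> l" "l < lv I" "lv I - d = Suc l" using Suc.prems by (auto simp: l_def)
  have follower: "feasr (hat I m') d y = (if primed_rows_sat I m' (Suc l) y then feasr I d y else {})" for y
  proof -
    have "primed_rows_sat I m' (Suc l) z \<longleftrightarrow> primed_rows_sat I m' (Suc l) y" if "z \<in> feasr I d y" for z
      using primed_rows_sat_cong[of "Suc l" z y] feasr_agrees_below[OF that] l by simp
    then show ?thesis using Suc.IH[of y] Suc.prems l by auto
  qed
  show ?case
    unfolding feasr.simps lv_hat vecs_hat obj_hat l_def[symmetric] l(3) follower
      cons_ok_hat_below_last[OF l(1,2)] cons_ok_split[OF l(1,2)]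
    using primed_rows_sat_Suc[OF l(1)] by auto
qed

end

theorem lemma3p4:
  fixes I :: mlp and m' :: "nat \<Rightarrow> nat"
  assumes "lv I \<ge> 1"
    and "\<And>l. 1 \<le> l \<Longrightarrow> l < lv I \<Longrightarrow> m' l \<le> mc I l"
    and "\<And>l i r j. 1 \<le> l \<Longrightarrow> l < lv I \<Longrightarrow> l < i \<Longrightarrow> i \<le> lv I \<Longrightarrow> r < m' l \<Longrightarrow>
           j < nv I i \<Longrightarrow> Am I l i r j = 0"
  shows "feasible_set (hat I m') = feasible_set I \<and> opt_value (hat I m') = opt_value I"
proof -
  interpret primed_split I m' using assms(2,3) by unfold_locales
  have "feasible_set (hat I m') = feasible_set I"
    unfolding feasible_set_def feas_lvl_def lv_hat
    using feasr_hat[of "lv I - 1" "\<lambda>_ _. 0"] assms(1) by (simp add: primed_rows_sat_def)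
  then show ?thesis by (simp add: opt_value_def)
qed

end
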